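(* Let $M>2$, $p_M=\frac{M+2}{M-2}$, $m\ge1$, and for $p\in(1,p_M)$ let $v_p$ be the unique solution in $H^1_{0,M}$ of $-(t^{M-1}v')'=t^{M-1}|v|^{p-1}v$ on $(0,1)$, $v'(0)=0$, $v(1)=0$, with exactly $m$ nodal zones and $v_p(0)>0$. For all $i=0,\dots,m-1$, \[ \liminf_{p\to p_M}\int_{t_{i,p}}^{t_{i+1,p}}t^{M-1}|v_p|^{p+1}dt=\liminf_{p\to p_M}\int_{t_{i,p}}^{t_{i+1,p}}t^{M-1}|v_p'|^{2}dt\ge S_M^{M/2}, \] and in particular $\liminf_{p\to p_M}\mathcal M_{i,p}>0$.
   Context: $H^1_{0,M}$: measurable $v$ on $(0,1)$ with $\int_0^1t^{M-1}(v^2+|v'|^2)<\infty$ and $v(1)=0$. $0=t_{0,p}<t_{1,p}<\dots<t_{m,p}=1$ are $0$ and the zeros of $v_p$; $\mathcal M_{i,p}=\max_{[t_{i,p},t_{i+1,p}]}|v_p|$. $S_M=\inf\{\int_0^1t^{M-1}|v'|^2dt/(\int_0^1t^{M-1}|v|^{2M/(M-2)}dt)^{(M-2)/M}: v\in H^1_{0,M}\setminus\{0\}\}$ is the best constant of the Sobolev embedding of $H^1_{0,M}$ into the weighted space $L^{2M/(M-2)}$ with weight $t^{M-1}$. *)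

theory Defs
  imports "HOL-Analysis.Analysis"
begin

text \<open>The space H^1_{0,M}: v on (0,1] given (as its absolutely continuous representative)
  by v x = - integral of its weak derivative g over [x,1] (this encodes v(1) = 0),
  with the weighted norm integral of t^(M-1)(v^2 + g^2) over (0,1) finite.\<close>
definition H10M :: "real \<Rightarrow> (real \<Rightarrow> real) \<Rightarrow> (real \<Rightarrow> real) \<Rightarrow> bool" where
  "H10M M v g \<longleftrightarrow>
     (\<forall>a\<in>{0<..<1}. g integrable_on {a..1}) \<and>
     (\<forall>x\<in>{0<..1}. v x = - integral {x..1} g) \<and>
     set_integrable lborel {0<..<1::real} (\<lambda>t. t powr (M-1) * (v t)\<^sup>2) \<and>
     set_integrable lborel {0<..<1::real} (\<lambda>t. t powr (M-1) * (g t)\<^sup>2)"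

definition S_M :: "real \<Rightarrow> real" where
  "S_M M = (INF vg \<in> {(v, g). H10M M v g \<and> (\<exists>t\<in>{0<..1}. v t \<noteq> 0) \<and>
        set_integrable lborel {0<..<1::real} (\<lambda>t. t powr (M-1) * \<bar>v t\<bar> powr (2*M/(M-2)))}.
      (LINT t:{0<..<1}|lborel. t powr (M-1) * (snd vg t)\<^sup>2) /
      (LINT t:{0<..<1}|lborel. t powr (M-1) * \<bar>fst vg t\<bar> powr (2*M/(M-2))) powr ((M-2)/M))"

text \<open>v is a (classical) solution of -(t^(M-1) v')' = t^(M-1) |v|^(p-1) v on (0,1),
  v'(0) = 0, v(1) = 0, with derivative v', exactly m nodal zones (m-1 zeros in (0,1)),
  and v(0) > 0.\<close>
definition radial_sol :: "real \<Rightarrow> real \<Rightarrow> nat \<Rightarrow> (real \<Rightarrow> real) \<Rightarrow> (real \<Rightarrow> real) \<Rightarrow> bool" where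
  "radial_sol M p m v v' \<longleftrightarrow>
     (\<forall>t\<in>{0..1}. (v has_real_derivative v' t) (at t within {0..1})) \<and>
     continuous_on {0..1} v' \<and> v' 0 = 0 \<and> v 1 = 0 \<and>
     (\<forall>t\<in>{0<..<1}. ((\<lambda>s. s powr (M-1) * v' s) has_real_derivative
         - (t powr (M-1) * (\<bar>v t\<bar> powr (p-1) * v t))) (at t)) \<and>
     finite {t\<in>{0<..<1}. v t = 0} \<and> card {t\<in>{0<..<1}. v t = 0} = m - 1 \<and>
     v 0 > 0"

text \<open>The points 0 = t_0 < t_1 < ... < t_m = 1: 0 and the zeros of v in (0,1].\<close>
definition nodes :: "(real \<Rightarrow> real) \<Rightarrow> nat \<Rightarrow> real" where
  "nodes v i = sorted_list_of_set ({0} \<union> {t\<in>{0<..1}. v t = 0}) ! i"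

end

theory Submission
  imports Defs
begin

(* On a nodal zone [a,b] of v_p, testing the equation with v_p gives the energy identity
   E = int t^(M-1) |v_p|^(p+1) = int t^(M-1) |v_p'|^2.  Extended by zero outside the zone, v_p is
   admissible for S_M, so S_M B^(2/2* ) <= E with B = int t^(M-1) |v_p|^2* and 2* = 2M/(M-2).
   Hoelder's inequality for the weight t^(M-1), which has mass at most 1 on [0,1], gives
   E <= B^((p+1)/2* ); together S_M^((p+1)/(p-1)) <= E, and (p+1)/(p-1) -> M/2 as p -> p_M.
   For the maximum K of |v_p| on the zone, E <= K^(p-1) int t^(M-1) v_p^2 <= K^(p-1) (4/M^2) E
   by a weighted Poincare inequality, so K^(p-1) >= M^2/4 > 1. *)

abbreviation sobolev_exponent :: "real \<Rightarrow> real" where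
  "sobolev_exponent M \<equiv> 2*M/(M-2)"

definition sobolev_quotient :: "real \<Rightarrow> (real \<Rightarrow> real) \<Rightarrow> (real \<Rightarrow> real) \<Rightarrow> real" where
  "sobolev_quotient M v g =
     (LINT t:{0<..<1}|lborel. t powr (M-1) * (g t)\<^sup>2) /
     (LINT t:{0<..<1}|lborel. t powr (M-1) * \<bar>v t\<bar> powr sobolev_exponent M) powr ((M-2)/M)"

definition sobolev_admissible :: "real \<Rightarrow> ((real \<Rightarrow> real) \<times> (real \<Rightarrow> real)) set" where
  "sobolev_admissible M = {(v, g). H10M M v g \<and> (\<exists>t\<in>{0<..1}. v t \<noteq> 0) \<and>
      set_integrable lborel {0<..<1::real} (\<lambda>t. t powr (M-1) * \<bar>v t\<bar> powr sobolev_exponent M)}"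

lemma S_M_eq_INF_sobolev_quotient:
  "S_M M = (INF vg\<in>sobolev_admissible M. sobolev_quotient M (fst vg) (snd vg))"
  unfolding S_M_def sobolev_admissible_def sobolev_quotient_def ..

lemma sobolev_quotient_nonneg: "0 \<le> sobolev_quotient M v g"
  unfolding sobolev_quotient_def
  by (intro divide_nonneg_nonneg) (auto simp: set_lebesgue_integral_def indicator_def)

lemma S_M_le_sobolev_quotient:
  assumes "(v, g) \<in> sobolev_admissible M"
  shows "S_M M \<le> sobolev_quotient M v g"
proof -
  have "bdd_below ((\<lambda>vg. sobolev_quotient M (fst vg) (snd vg)) ` sobolev_admissible M)"
    using sobolev_quotient_nonneg by (intro bdd_belowI2)
  from cINF_lower[OF this assms] show ?thesis
    unfolding S_M_eq_INF_sobolev_quotient by simp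
qed

lemma S_M_nonneg:
  assumes "sobolev_admissible M \<noteq> {}"
  shows "0 \<le> S_M M"
  unfolding S_M_eq_INF_sobolev_quotient using assms by (intro cINF_greatest sobolev_quotient_nonneg)

definition zero_extension :: "real set \<Rightarrow> (real \<Rightarrow> real) \<Rightarrow> real \<Rightarrow> real" where
  "zero_extension S f t = (if t \<in> S then f t else 0)"

lemma comp_zero_extension:
  assumes "h 0 = 0"
  shows "(\<lambda>t. c t * h (zero_extension S f t)) = zero_extension S (\<lambda>t. c t * h (f t))"
  using assms by (auto simp: zero_extension_def)

lemma
  fixes f :: "real \<Rightarrow> real"
  assumes f: "continuous_on {a..b} f" and sub: "{a..b} \<subseteq> {0..1}"
  shows set_integrable_zero_extension: "set_integrable lborel {0<..<1} (zero_extension {a..b} f)"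
    and set_integral_zero_extension:
      "(LINT t:{0<..<1}|lborel. zero_extension {a..b} f t) = integral {a..b} f"
proof -
  have "set_integrable lborel ({0<..<1} \<inter> {a..b}) f"
    by (rule set_integrable_subset[OF borel_integrable_atLeastAtMost'[OF f]]) auto
  moreover have "(\<lambda>t. indicator ({0<..<1} \<inter> {a..b}) t *\<^sub>R f t) =
      (\<lambda>t. indicator {0<..<1} t *\<^sub>R zero_extension {a..b} f t)"
    by (auto simp: indicator_def zero_extension_def)
  ultimately show int: "set_integrable lborel {0<..<1} (zero_extension {a..b} f)"
    unfolding set_integrable_def by simp
  have "(LINT t:{0<..<1}|lborel. zero_extension {a..b} f t) =
        integral {0..1} (zero_extension {a..b} f)"
    by (simp add: set_borel_integral_eq_integral(2)[OF int] integral_open_interval_real)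
  also have "\<dots> = integral ({a..b} \<inter> {0..1}) f"
    unfolding zero_extension_def by (rule integral_restrict_Int)
  also have "{a..b} \<inter> {0..1} = {a..b}"
    using sub by auto
  finally show "(LINT t:{0<..<1}|lborel. zero_extension {a..b} f t) = integral {a..b} f" .
qed

lemma integral_le_Hoelder_unit_mass:
  fixes w f :: "real \<Rightarrow> real"
  assumes w: "continuous_on {a..b} w" "\<And>t. t \<in> {a..b} \<Longrightarrow> 0 \<le> w t"
    and mass: "integral {a..b} w \<le> 1"
    and f: "continuous_on {a..b} f" "\<And>t. t \<in> {a..b} \<Longrightarrow> 0 \<le> f t"
    and r: "r > 1"
    and B_pos: "integral {a..b} (\<lambda>t. w t * f t powr r) > 0"
  shows "integral {a..b} (\<lambda>t. w t * f t) \<le> integral {a..b} (\<lambda>t. w t * f t powr r) powr (1/r)"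
proof -
  define B where "B = integral {a..b} (\<lambda>t. w t * f t powr r)"
  define \<beta> where "\<beta> = B powr (1/r)"
  define r' where "r' = r/(r-1)"
  have r': "r' > 1" "1/r + 1/r' = 1" unfolding r'_def using r by (auto simp: field_simps)
  have \<beta>: "\<beta> > 0" "\<beta> powr r = B" unfolding \<beta>_def B_def using B_pos r by (auto simp: powr_powr)
  have int_wf: "(\<lambda>t. w t * f t) integrable_on {a..b}"
    using w f by (intro integrable_continuous_interval continuous_intros)
  have int_wfr: "(\<lambda>t. w t * f t powr r) integrable_on {a..b}"
    using w f r by (intro integrable_continuous_interval continuous_intros continuous_on_powr') auto
  have int_w: "w integrable_on {a..b}"
    using w by (intro integrable_continuous_interval)
  \<comment> \<open>Young's inequality for f t / \<beta> and 1, with \<beta> the claimed bound\<close>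
  have young: "w t * f t / \<beta> \<le> w t * f t powr r / (r * B) + w t / r'" if t: "t \<in> {a..b}" for t
  proof -
    have "f t / \<beta> * 1 \<le> (f t / \<beta>) powr r / r + 1 powr r' / r'"
      using f(2)[OF t] \<beta> r r' by (intro Youngs_inequality) auto
    also have "(f t / \<beta>) powr r = f t powr r / B"
      using f(2)[OF t] \<beta> by (simp add: powr_divide)
    finally have "f t / \<beta> \<le> f t powr r / (r * B) + 1 / r'" by (simp add: field_simps)
    from mult_left_mono[OF this w(2)[OF t]] show ?thesis by (simp add: field_simps)
  qed
  have "integral {a..b} (\<lambda>t. w t * f t) / \<beta> = integral {a..b} (\<lambda>t. w t * f t / \<beta>)"
    by simp
  also have "\<dots> \<le> integral {a..b} (\<lambda>t. w t * f t powr r / (r * B) + w t / r')"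
    using int_wf int_wfr int_w young by (intro integral_le integrable_add integrable_on_divide) auto
  also have "\<dots> = B / (r * B) + integral {a..b} w / r'"
    using int_wfr int_w by (simp add: integral_add integrable_on_divide B_def)
  also have "\<dots> \<le> 1/r + 1/r'"
    using divide_right_mono[OF mass, of r'] r' B_pos by (simp add: B_def)
  finally have "integral {a..b} (\<lambda>t. w t * f t) / \<beta> \<le> 1" using r' by simp
  then show ?thesis using \<beta> by (simp add: \<beta>_def B_def field_simps)
qed

lemma has_integral_derivative_vanishing_ends:
  fixes F F' :: "real \<Rightarrow> real"
  assumes "a \<le> b" and "continuous_on {a..b} F"
    and "\<And>t. t \<in> {a<..<b} \<Longrightarrow> (F has_real_derivative F' t) (at t)"
    and "F a = 0" and "F b = 0"
  shows "(F' has_integral 0) {a..b}"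
  using fundamental_theorem_of_calculus_interior_strong[of "{}" a b F F'] assms
  by (simp add: has_real_derivative_iff_has_vector_derivative)

lemma abs_powr_mult_square: "\<bar>x\<bar> powr e * x\<^sup>2 = \<bar>x\<bar> powr (e + 2)" for x e :: real
proof (cases "x = 0")
  case False
  then show ?thesis by (simp add: powr_add powr_numeral)
qed simp

locale zone_function =
  fixes M a b :: real and v dv :: "real \<Rightarrow> real"
  assumes M_gt_2: "M > 2"
    and zone_bounds: "0 \<le> a" "a < b" "b \<le> 1"
    and has_derivative: "\<And>t. t \<in> {a..b} \<Longrightarrow> (v has_real_derivative dv t) (at t within {a..b})"
    and continuous_dv: "continuous_on {a..b} dv"
    and left_boundary: "a = 0 \<or> v a = 0"
    and right_boundary: "v b = 0"
begin

lemma zone_subset: "{a..b} \<subseteq> {0..1}"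
  using zone_bounds by auto

lemma continuous_v: "continuous_on {a..b} v"
  using has_derivative by (rule DERIV_continuous_on)

lemma has_real_derivative_at: "t \<in> {a<..<b} \<Longrightarrow> (v has_real_derivative dv t) (at t)"
  using has_derivative[of t] at_within_Icc_at[of a t b] by auto

lemma continuous_weight: "e > 0 \<Longrightarrow> continuous_on {a..b} (\<lambda>t. t powr e)"
  using zone_bounds by (intro continuous_on_powr' continuous_intros) auto

lemma continuous_abs_powr: "e > 0 \<Longrightarrow> continuous_on {a..b} (\<lambda>t. \<bar>v t\<bar> powr e)"
  using continuous_v by (intro continuous_on_powr' continuous_intros) auto

lemma continuous_weighted:
  "continuous_on {a..b} f \<Longrightarrow> continuous_on {a..b} (\<lambda>t. t powr (M-1) * f t)"
  using continuous_on_mult[OF continuous_weight[of "M-1"]] M_gt_2 by auto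

lemma weight_le_1: "t \<in> {a..b} \<Longrightarrow> t powr (M-1) \<le> 1"
  using powr_mono2[of "M-1" t 1] M_gt_2 zone_bounds by auto

lemma integral_derivative_to_right_end: "c \<in> {a..b} \<Longrightarrow> integral {c..b} dv = - v c"
proof -
  assume c: "c \<in> {a..b}"
  have "(dv has_integral (v b - v c)) {c..b}"
  proof (rule fundamental_theorem_of_calculus)
    fix x assume "x \<in> {c..b}"
    with c have "(v has_real_derivative dv x) (at x within {c..b})"
      by (intro has_field_derivative_subset[OF has_derivative]) auto
    then show "(v has_vector_derivative dv x) (at x within {c..b})"
      by (simp add: has_real_derivative_iff_has_vector_derivative)
  qed (use c in auto)
  then show ?thesis using right_boundary by (simp add: integral_unique)
qed

lemma H10M_zero_extension: "H10M M (zero_extension {a..b} v) (zero_extension {a..b} dv)"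
  unfolding H10M_def
proof (intro conjI ballI)
  fix c assume "c \<in> {0<..<1::real}"
  have "dv integrable_on ({a..b} \<inter> {c..1})"
    using continuous_dv by (auto intro!: integrable_continuous_interval intro: continuous_on_subset)
  then show "zero_extension {a..b} dv integrable_on {c..1}"
    unfolding zero_extension_def integrable_restrict_Int[symmetric] .
next
  fix x assume x: "x \<in> {0<..1::real}"
  have int_eq: "integral {x..1} (zero_extension {a..b} dv) = integral ({a..b} \<inter> {x..1}) dv"
    unfolding zero_extension_def by (rule integral_restrict_Int)
  show "zero_extension {a..b} v x = - integral {x..1} (zero_extension {a..b} dv)"
  proof (cases "x \<le> b")
    case False
    then have "{a..b} \<inter> {x..1} = {}" by auto
    then show ?thesis using False int_eq by (simp add: zero_extension_def)
  next
    case True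
    then have "{a..b} \<inter> {x..1} = {max a x..b}" using zone_bounds by auto
    then have "integral {x..1} (zero_extension {a..b} dv) = - v (max a x)"
      using integral_derivative_to_right_end[of "max a x"] True zone_bounds int_eq by auto
    moreover have "zero_extension {a..b} v x = v (max a x)"
      using True x left_boundary by (auto simp: zero_extension_def max_def)
    ultimately show ?thesis by simp
  qed
next
  from set_integrable_zero_extension[OF continuous_weighted[OF continuous_on_power[OF continuous_v]] zone_subset]
  show "set_integrable lborel {0<..<1::real} (\<lambda>t. t powr (M-1) * (zero_extension {a..b} v t)\<^sup>2)"
    by (simp add: comp_zero_extension[of "\<lambda>x. x\<^sup>2"])
  from set_integrable_zero_extension[OF continuous_weighted[OF continuous_on_power[OF continuous_dv]] zone_subset]
  show "set_integrable lborel {0<..<1::real} (\<lambda>t. t powr (M-1) * (zero_extension {a..b} dv t)\<^sup>2)"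
    by (simp add: comp_zero_extension[of "\<lambda>x. x\<^sup>2"])
qed

lemma weighted_Poincare_inequality:
  "integral {a..b} (\<lambda>t. t powr (M-1) * (v t)\<^sup>2)
     \<le> 4 / M\<^sup>2 * integral {a..b} (\<lambda>t. t powr (M-1) * (dv t)\<^sup>2)"
proof -
  \<comment> \<open>the derivative of t^M v^2, which vanishes at both ends\<close>
  define F' where "F' t = M * t powr (M-1) * (v t)\<^sup>2 + 2 * t powr M * v t * dv t" for t
  have F': "(F' has_integral 0) {a..b}"
  proof (rule has_integral_derivative_vanishing_ends[where F = "\<lambda>t. t powr M * (v t)\<^sup>2"])
    show "continuous_on {a..b} (\<lambda>t. t powr M * (v t)\<^sup>2)"
      using continuous_on_mult[OF continuous_weight[of M] continuous_on_power[OF continuous_v]] M_gt_2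
      by auto
    fix t assume t: "t \<in> {a<..<b}"
    then have "t > 0" using zone_bounds by auto
    with DERIV_mult[OF has_real_derivative_powr DERIV_power[OF has_real_derivative_at[OF t], of 2]]
    show "((\<lambda>t. t powr M * (v t)\<^sup>2) has_real_derivative F' t) (at t)"
      unfolding F'_def by (simp add: algebra_simps)
  qed (use zone_bounds left_boundary right_boundary M_gt_2 in auto)
  have pointwise: "M/2 * (t powr (M-1) * (v t)\<^sup>2) \<le> F' t + 2/M * (t powr (M-1) * (dv t)\<^sup>2)"
    if t: "t \<in> {a..b}" for t
  proof -
    define w where "w = t powr (M-1)"
    have "t powr M = t * w"
      using powr_mult_base[of t "M-1"] t zone_bounds unfolding w_def by simp
    then have "F' t + 2/M * (w * (dv t)\<^sup>2) - M/2 * (w * (v t)\<^sup>2)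
        = M/2 * w * (v t + 2/M * t * dv t)\<^sup>2 + 2/M * w * (1 - t\<^sup>2) * (dv t)\<^sup>2"
      unfolding F'_def w_def[symmetric] using M_gt_2 by (simp add: field_simps power2_eq_square)
    moreover have "0 \<le> M/2 * w * (v t + 2/M * t * dv t)\<^sup>2 + 2/M * w * (1 - t\<^sup>2) * (dv t)\<^sup>2"
      using t zone_bounds M_gt_2 unfolding w_def
      by (intro add_nonneg_nonneg mult_nonneg_nonneg) (auto simp: abs_square_le_1)
    ultimately show ?thesis
      unfolding w_def by linarith
  qed
  have int_v: "(\<lambda>t. t powr (M-1) * (v t)\<^sup>2) integrable_on {a..b}"
    and int_dv: "(\<lambda>t. t powr (M-1) * (dv t)\<^sup>2) integrable_on {a..b}"
    by (intro integrable_continuous_interval continuous_weighted continuous_on_power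
        continuous_v continuous_dv)+
  have "M/2 * integral {a..b} (\<lambda>t. t powr (M-1) * (v t)\<^sup>2)
      = integral {a..b} (\<lambda>t. M/2 * (t powr (M-1) * (v t)\<^sup>2))"
    by simp
  also have "\<dots> \<le> integral {a..b} (\<lambda>t. F' t + 2/M * (t powr (M-1) * (dv t)\<^sup>2))"
    by (intro integral_le integrable_add integrable_on_mult_right int_v int_dv
        has_integral_integrable[OF F'] pointwise)
  also have "\<dots> = 2/M * integral {a..b} (\<lambda>t. t powr (M-1) * (dv t)\<^sup>2)"
    using integral_add[OF has_integral_integrable[OF F'] integrable_on_mult_right[OF int_dv, of "2/M"]]
    by (simp only: integral_unique[OF F'] integral_mult_right)
  finally show ?thesis
    using M_gt_2 by (simp add: field_simps power2_eq_square)
qed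

end

locale nodal_zone = zone_function +
  fixes p :: real
  assumes p_gt_1: "p > 1"
    and ode: "\<And>t. t \<in> {a<..<b} \<Longrightarrow> ((\<lambda>s. s powr (M-1) * dv s) has_real_derivative
         - (t powr (M-1) * (\<bar>v t\<bar> powr (p-1) * v t))) (at t)"
    and nonzero: "\<And>t. t \<in> {a<..<b} \<Longrightarrow> v t \<noteq> 0"
begin

lemma energy_identity:
  "integral {a..b} (\<lambda>t. t powr (M-1) * \<bar>v t\<bar> powr (p+1))
     = integral {a..b} (\<lambda>t. t powr (M-1) * (dv t)\<^sup>2)"
proof -
  have diff: "((\<lambda>t. t powr (M-1) * (dv t)\<^sup>2 - t powr (M-1) * \<bar>v t\<bar> powr (p+1)) has_integral 0) {a..b}"
  proof (rule has_integral_derivative_vanishing_ends[where F = "\<lambda>t. t powr (M-1) * dv t * v t"])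
    show "continuous_on {a..b} (\<lambda>t. t powr (M-1) * dv t * v t)"
      by (intro continuous_on_mult continuous_weighted continuous_dv continuous_v)
    fix t assume t: "t \<in> {a<..<b}"
    have "\<bar>v t\<bar> powr (p+1) = \<bar>v t\<bar> powr (p-1) * (v t)\<^sup>2"
      using abs_powr_mult_square[of "v t" "p-1"] by (simp add: add.commute)
    with DERIV_mult[OF ode[OF t] has_real_derivative_at[OF t]]
    show "((\<lambda>t. t powr (M-1) * dv t * v t) has_real_derivative
        t powr (M-1) * (dv t)\<^sup>2 - t powr (M-1) * \<bar>v t\<bar> powr (p+1)) (at t)"
      by (elim DERIV_cong) (simp add: power2_eq_square algebra_simps)
  qed (use zone_bounds left_boundary right_boundary M_gt_2 in auto)
  have "(\<lambda>t. t powr (M-1) * (dv t)\<^sup>2) integrable_on {a..b}"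
    "(\<lambda>t. t powr (M-1) * \<bar>v t\<bar> powr (p+1)) integrable_on {a..b}"
    using p_gt_1 by (intro integrable_continuous_interval continuous_weighted continuous_on_power
        continuous_abs_powr continuous_dv; simp)+
  from integral_diff[OF this] show ?thesis
    using integral_unique[OF diff] by simp
qed

lemma integral_weighted_abs_powr_pos:
  assumes "e > 0"
  shows "0 < integral {a..b} (\<lambda>t. t powr (M-1) * \<bar>v t\<bar> powr e)"
proof -
  have "integral (cbox a b) (\<lambda>_. 0) < integral (cbox a b) (\<lambda>t. t powr (M-1) * \<bar>v t\<bar> powr e)"
  proof (rule integral_less)
    show "continuous_on (cbox a b) (\<lambda>t. t powr (M-1) * \<bar>v t\<bar> powr e)"
      using continuous_weighted[OF continuous_abs_powr[OF assms]] by simp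
    show "box a b \<noteq> {}"
      using zone_bounds by simp
    fix t assume "t \<in> box a b"
    then show "0 < t powr (M-1) * \<bar>v t\<bar> powr e"
      using nonzero[of t] zone_bounds by simp
  qed simp
  then show ?thesis by simp
qed

lemma energy_pos: "0 < integral {a..b} (\<lambda>t. t powr (M-1) * (dv t)\<^sup>2)"
  using integral_weighted_abs_powr_pos[of "p+1"] p_gt_1 energy_identity by simp

lemma one_le_SUP_abs: "1 \<le> (SUP t\<in>{a..b}. \<bar>v t\<bar>)"
proof -
  define K where "K = (SUP t\<in>{a..b}. \<bar>v t\<bar>)"
  define E where "E = integral {a..b} (\<lambda>t. t powr (M-1) * (dv t)\<^sup>2)"
  have "bdd_above ((\<lambda>t. \<bar>v t\<bar>) ` {a..b})"
    using continuous_v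
    by (intro bounded_imp_bdd_above compact_imp_bounded compact_continuous_image continuous_intros)
      auto
  then have K: "\<bar>v t\<bar> \<le> K" if "t \<in> {a..b}" for t
    unfolding K_def using that by (intro cSUP_upper)
  then have "0 \<le> K" using zone_bounds by force
  have "E = integral {a..b} (\<lambda>t. \<bar>v t\<bar> powr (p-1) * (t powr (M-1) * (v t)\<^sup>2))"
    unfolding E_def energy_identity[symmetric]
    by (simp add: abs_powr_mult_square add.commute mult.left_commute)
  also have "\<dots> \<le> integral {a..b} (\<lambda>t. K powr (p-1) * (t powr (M-1) * (v t)\<^sup>2))"
    using K p_gt_1 continuous_v
    by (intro integral_le integrable_continuous_interval continuous_on_mult continuous_weighted
        continuous_on_power continuous_abs_powr mult_right_mono powr_mono2 continuous_on_const) auto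
  also have "\<dots> = K powr (p-1) * integral {a..b} (\<lambda>t. t powr (M-1) * (v t)\<^sup>2)"
    by simp
  also have "\<dots> \<le> K powr (p-1) * (4 / M\<^sup>2 * E)"
    unfolding E_def by (intro mult_left_mono weighted_Poincare_inequality) simp
  finally have "M\<^sup>2 / 4 \<le> K powr (p-1)"
    using energy_pos M_gt_2 unfolding E_def[symmetric] by (simp add: field_simps)
  moreover have "1 < M\<^sup>2 / 4"
    using M_gt_2 power_strict_mono[of 2 M 2] by simp
  ultimately have "1 < K powr (p-1)" by simp
  then show ?thesis
    using powr_mono2[of "p-1" K 1] \<open>0 \<le> K\<close> p_gt_1 unfolding K_def[symmetric] by force
qed

lemma zero_extension_admissible:
  "(zero_extension {a..b} v, zero_extension {a..b} dv) \<in> sobolev_admissible M"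
proof -
  have "(a+b)/2 \<in> {0<..1}" "zero_extension {a..b} v ((a+b)/2) \<noteq> 0"
    using zone_bounds nonzero[of "(a+b)/2"] by (auto simp: zero_extension_def)
  moreover have "set_integrable lborel {0<..<1}
      (\<lambda>t. t powr (M-1) * \<bar>zero_extension {a..b} v t\<bar> powr sobolev_exponent M)"
    using set_integrable_zero_extension[OF continuous_weighted[OF continuous_abs_powr] zone_subset]
      M_gt_2
    by (simp add: comp_zero_extension[of "\<lambda>x. \<bar>x\<bar> powr sobolev_exponent M"])
  ultimately show ?thesis
    unfolding sobolev_admissible_def using H10M_zero_extension by blast
qed

lemma sobolev_admissible_nonempty: "sobolev_admissible M \<noteq> {}"
  using zero_extension_admissible by blast

lemma S_M_le_zone_quotient:
  "S_M M \<le> integral {a..b} (\<lambda>t. t powr (M-1) * (dv t)\<^sup>2) /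
     integral {a..b} (\<lambda>t. t powr (M-1) * \<bar>v t\<bar> powr sobolev_exponent M) powr ((M-2)/M)"
proof -
  have "sobolev_quotient M (zero_extension {a..b} v) (zero_extension {a..b} dv) =
     integral {a..b} (\<lambda>t. t powr (M-1) * (dv t)\<^sup>2) /
     integral {a..b} (\<lambda>t. t powr (M-1) * \<bar>v t\<bar> powr sobolev_exponent M) powr ((M-2)/M)"
    unfolding sobolev_quotient_def comp_zero_extension[of "\<lambda>x. x\<^sup>2", simplified]
      comp_zero_extension[of "\<lambda>x. \<bar>x\<bar> powr sobolev_exponent M", simplified]
    using M_gt_2
    by (simp add: set_integral_zero_extension[OF _ zone_subset] continuous_weighted
        continuous_on_power continuous_dv continuous_abs_powr)
  with S_M_le_sobolev_quotient[OF zero_extension_admissible] show ?thesis by simp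
qed

lemma energy_le_critical_integral_powr:
  assumes subcritical: "p < (M+2)/(M-2)"
  shows "integral {a..b} (\<lambda>t. t powr (M-1) * (dv t)\<^sup>2) \<le>
    integral {a..b} (\<lambda>t. t powr (M-1) * \<bar>v t\<bar> powr sobolev_exponent M)
      powr ((p+1) / sobolev_exponent M)"
proof -
  define s where "s = sobolev_exponent M"
  have "p + 1 < s"
    using subcritical M_gt_2 unfolding s_def by (simp add: field_simps)
  have powr_eq: "(\<bar>v t\<bar> powr (p+1)) powr (s/(p+1)) = \<bar>v t\<bar> powr s" for t
    using p_gt_1 by (simp add: powr_powr)
  have "integral {a..b} (\<lambda>t. t powr (M-1)) \<le> integral {a..b} (\<lambda>t. 1)"
    using M_gt_2 weight_le_1
    by (intro integral_le integrable_continuous_interval continuous_weight) auto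
  also have "\<dots> \<le> 1"
    using zone_bounds by simp
  finally have "integral {a..b} (\<lambda>t. t powr (M-1) * \<bar>v t\<bar> powr (p+1)) \<le>
      integral {a..b} (\<lambda>t. t powr (M-1) * (\<bar>v t\<bar> powr (p+1)) powr (s/(p+1))) powr (1/(s/(p+1)))"
    using M_gt_2 p_gt_1 \<open>p + 1 < s\<close> integral_weighted_abs_powr_pos[of s]
    by (intro integral_le_Hoelder_unit_mass continuous_weight continuous_abs_powr)
      (auto simp: powr_eq)
  then show ?thesis
    unfolding energy_identity powr_eq by (simp add: s_def mult.commute)
qed

lemma S_M_powr_le_energy:
  assumes subcritical: "p < (M+2)/(M-2)"
  shows "S_M M powr ((p+1)/(p-1)) \<le> integral {a..b} (\<lambda>t. t powr (M-1) * (dv t)\<^sup>2)"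
proof -
  define E where "E = integral {a..b} (\<lambda>t. t powr (M-1) * (dv t)\<^sup>2)"
  define B where "B = integral {a..b} (\<lambda>t. t powr (M-1) * \<bar>v t\<bar> powr sobolev_exponent M)"
  define q where "q = p + 1"
  have "q > 2" "E > 0" "B > 0"
    using p_gt_1 energy_pos integral_weighted_abs_powr_pos M_gt_2
    unfolding q_def E_def B_def by auto
  have exponent: "q / sobolev_exponent M * (2/q) = (M-2)/M"
    using \<open>q > 2\<close> M_gt_2 by (simp add: field_simps)
  have "E powr (2/q) \<le> (B powr (q / sobolev_exponent M)) powr (2/q)"
    using energy_le_critical_integral_powr[OF subcritical] \<open>E > 0\<close> \<open>q > 2\<close>
    unfolding E_def B_def q_def by (intro powr_mono2) auto
  also have "\<dots> = B powr ((M-2)/M)"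
    unfolding powr_powr exponent ..
  finally have "E powr (2/q) \<le> B powr ((M-2)/M)" .
  then have "E / B powr ((M-2)/M) \<le> E / E powr (2/q)"
    using \<open>E > 0\<close> \<open>B > 0\<close> by (intro divide_left_mono) auto
  also have "\<dots> = E powr ((q-2)/q)"
    using \<open>E > 0\<close> \<open>q > 2\<close> by (simp add: diff_divide_distrib powr_diff)
  finally have "S_M M \<le> E powr ((q-2)/q)"
    using S_M_le_zone_quotient unfolding E_def B_def by linarith
  then have "S_M M powr (q/(q-2)) \<le> (E powr ((q-2)/q)) powr (q/(q-2))"
    using S_M_nonneg[OF sobolev_admissible_nonempty] \<open>q > 2\<close> by (intro powr_mono2) auto
  also have "\<dots> = E"
    using \<open>E > 0\<close> \<open>q > 2\<close> by (simp add: powr_powr)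
  finally show ?thesis
    unfolding E_def q_def by simp
qed

end

lemma sorted_list_of_set_no_elem_between:
  fixes Z :: "'a::linorder set"
  assumes "finite Z" and "Suc i < card Z" and "z \<in> Z"
  shows "\<not> (sorted_list_of_set Z ! i < z \<and> z < sorted_list_of_set Z ! Suc i)"
proof
  let ?xs = "sorted_list_of_set Z"
  assume between: "?xs ! i < z \<and> z < ?xs ! Suc i"
  obtain j where j: "j < length ?xs" "?xs ! j = z"
    using assms by (metis in_set_conv_nth set_sorted_list_of_set)
  have "length ?xs = card Z" by simp
  show False
  proof (cases "j \<le> i")
    case True
    then have "?xs ! j \<le> ?xs ! i"
      using assms \<open>length ?xs = card Z\<close> by (intro sorted_nth_mono) auto
    then show False using between j by (metis leD)
  next
    case False
    then have "?xs ! Suc i \<le> ?xs ! j"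
      using j by (intro sorted_nth_mono) auto
    then show False using between j by (metis leD)
  qed
qed

lemma nodal_zone_nodes:
  assumes sol: "radial_sol M p m v dv" and "M > 2" "p > 1" "i < m"
  shows "nodal_zone M (nodes v i) (nodes v (Suc i)) v dv p"
proof -
  define Z where "Z = {0} \<union> {t\<in>{0<..1::real}. v t = 0}"
  have "Z = insert 0 (insert 1 {t\<in>{0<..<1}. v t = 0})"
    using sol unfolding Z_def radial_sol_def by auto
  then have Z: "finite Z" "card Z = m + 1"
    using sol \<open>i < m\<close> unfolding radial_sol_def by auto
  have nodes_Z: "nodes v k = sorted_list_of_set Z ! k" for k
    unfolding nodes_def Z_def ..
  have in_Z: "nodes v k \<in> Z" if "k \<le> m" for k
  proof -
    have "k < length (sorted_list_of_set Z)"
      using that Z by simp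
    from nth_mem[OF this] show ?thesis
      using Z unfolding nodes_Z by simp
  qed
  have lt: "nodes v i < nodes v (Suc i)"
    unfolding nodes_Z
    by (rule sorted_wrt_nth_less[OF strict_sorted_list_of_set]) (use Z \<open>i < m\<close> in auto)
  have nonzero: "v t \<noteq> 0" if "t \<in> {nodes v i<..<nodes v (Suc i)}" for t
  proof
    assume "v t = 0"
    moreover have "nodes v i \<ge> 0" "nodes v (Suc i) \<le> 1"
      using in_Z[of i] in_Z[of "Suc i"] \<open>i < m\<close> unfolding Z_def by auto
    ultimately have "t \<in> Z"
      using that unfolding Z_def by auto
    with sorted_list_of_set_no_elem_between[OF Z(1) _ this, of i] that Z \<open>i < m\<close>
    show False unfolding nodes_Z by auto
  qed
  show ?thesis
  proof unfold_locales
    show "0 \<le> nodes v i" "nodes v (Suc i) \<le> 1" "nodes v i = 0 \<or> v (nodes v i) = 0"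
      "v (nodes v (Suc i)) = 0"
      using in_Z[of i] in_Z[of "Suc i"] lt \<open>i < m\<close> unfolding Z_def by auto
    then have sub: "{nodes v i..nodes v (Suc i)} \<subseteq> {0..1}" by auto
    show "(v has_real_derivative dv t) (at t within {nodes v i..nodes v (Suc i)})"
      if "t \<in> {nodes v i..nodes v (Suc i)}" for t
    proof (rule has_field_derivative_subset[OF _ sub])
      show "(v has_real_derivative dv t) (at t within {0..1})"
        using sol that sub unfolding radial_sol_def by auto
    qed
    show "continuous_on {nodes v i..nodes v (Suc i)} dv"
      using sol sub unfolding radial_sol_def by (auto intro: continuous_on_subset)
    show "((\<lambda>s. s powr (M-1) * dv s) has_real_derivative
        - (t powr (M-1) * (\<bar>v t\<bar> powr (p-1) * v t))) (at t)"
      if "t \<in> {nodes v i<..<nodes v (Suc i)}" for t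
      using sol that sub unfolding radial_sol_def by auto
  qed (use assms lt nonzero in auto)
qed

lemma tendsto_powr_critical_exponent:
  fixes S M :: real
  assumes "M > 2" and "S \<ge> 0"
  shows "((\<lambda>p. S powr ((p+1)/(p-1))) \<longlongrightarrow> S powr (M/2)) (at_left ((M+2)/(M-2)))"
proof (cases "S = 0")
  case False
  have "((\<lambda>p. (p+1)/(p-1)) \<longlongrightarrow> ((M+2)/(M-2)+1)/((M+2)/(M-2)-1)) (at_left ((M+2)/(M-2)))"
    using \<open>M > 2\<close> by (intro tendsto_intros) (auto simp: field_simps)
  moreover have "((M+2)/(M-2)+1)/((M+2)/(M-2)-1) = M/2"
    using \<open>M > 2\<close> by (simp add: field_simps)
  ultimately show ?thesis
    using False \<open>S \<ge> 0\<close> by (intro tendsto_powr tendsto_const) auto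
qed simp

lemma Liminf_ge_of_tendsto:
  assumes "(g \<longlongrightarrow> L) F" and "F \<noteq> bot" and "\<forall>\<^sub>F x in F. g x \<le> f x"
  shows "ereal L \<le> Liminf F (\<lambda>x. ereal (f x))"
proof -
  have "ereal L = Liminf F (\<lambda>x. ereal (g x))"
    using assms(1,2) by (intro lim_imp_Liminf[symmetric] tendsto_ereal)
  also have "\<dots> \<le> Liminf F (\<lambda>x. ereal (f x))"
    using assms(3) by (intro Liminf_mono) (auto elim!: eventually_mono)
  finally show ?thesis .
qed

theorem lemma2p5:
  fixes M :: real and m :: nat and v dv :: "real \<Rightarrow> real \<Rightarrow> real"
  assumes "M > 2" and "m \<ge> 1"
    and sol: "\<And>p. p \<in> {1<..<(M+2)/(M-2)} \<Longrightarrow> radial_sol M p m (v p) (dv p)"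
    and uniq: "\<And>p w dw. p \<in> {1<..<(M+2)/(M-2)} \<Longrightarrow> radial_sol M p m w dw \<Longrightarrow>
                 \<forall>t\<in>{0..1}. w t = v p t"
    and "i < m"
  shows "Liminf (at_left ((M+2)/(M-2)))
           (\<lambda>p. ereal (integral {nodes (v p) i..nodes (v p) (Suc i)}
                  (\<lambda>t. t powr (M-1) * \<bar>v p t\<bar> powr (p+1))))
         = Liminf (at_left ((M+2)/(M-2)))
           (\<lambda>p. ereal (integral {nodes (v p) i..nodes (v p) (Suc i)}
                  (\<lambda>t. t powr (M-1) * (dv p t)\<^sup>2)))
       \<and> Liminf (at_left ((M+2)/(M-2)))
           (\<lambda>p. ereal (integral {nodes (v p) i..nodes (v p) (Suc i)}
                  (\<lambda>t. t powr (M-1) * (dv p t)\<^sup>2)))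
         \<ge> ereal (S_M M powr (M/2))
       \<and> Liminf (at_left ((M+2)/(M-2)))
           (\<lambda>p. ereal (SUP t\<in>{nodes (v p) i..nodes (v p) (Suc i)}. \<bar>v p t\<bar>)) > 0"
proof -
  define P where "P = (M+2)/(M-2)"
  let ?zone = "\<lambda>p. {nodes (v p) i..nodes (v p) (Suc i)}"
  let ?E = "\<lambda>p. ereal (integral (?zone p) (\<lambda>t. t powr (M-1) * (dv p t)\<^sup>2))"
  have "P > 1"
    unfolding P_def using \<open>M > 2\<close> by (simp add: field_simps)
  then have subcritical: "\<forall>\<^sub>F p in at_left P. p \<in> {1<..<P}"
    by (rule eventually_at_left_real)
  have zone: "nodal_zone M (nodes (v p) i) (nodes (v p) (Suc i)) (v p) (dv p) p"
    if "p \<in> {1<..<P}" for p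
    using nodal_zone_nodes[OF sol] that assms unfolding P_def by auto
  have "0 \<le> S_M M"
    using S_M_nonneg[OF nodal_zone.sobolev_admissible_nonempty[OF zone[of "(1+P)/2"]]] \<open>P > 1\<close>
    by simp
  have "ereal (S_M M powr (M/2)) \<le> Liminf (at_left P) ?E"
    using subcritical tendsto_powr_critical_exponent[OF \<open>M > 2\<close> \<open>0 \<le> S_M M\<close>]
    by (intro Liminf_ge_of_tendsto) (auto elim!: eventually_mono
        intro: nodal_zone.S_M_powr_le_energy[OF zone] simp: P_def)
  moreover have "Liminf (at_left P)
      (\<lambda>p. ereal (integral (?zone p) (\<lambda>t. t powr (M-1) * \<bar>v p t\<bar> powr (p+1))))
      = Liminf (at_left P) ?E"
    using subcritical by (intro Liminf_eq)
      (auto elim!: eventually_mono simp: nodal_zone.energy_identity[OF zone])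
  moreover have "1 \<le> Liminf (at_left P) (\<lambda>p. ereal (SUP t\<in>?zone p. \<bar>v p t\<bar>))"
    using subcritical by (intro Liminf_bounded)
      (auto elim!: eventually_mono simp: nodal_zone.one_le_SUP_abs[OF zone])
  then have "0 < Liminf (at_left P) (\<lambda>p. ereal (SUP t\<in>?zone p. \<bar>v p t\<bar>))"
    by (rule order.strict_trans2[rotated]) simp
  ultimately show ?thesis
    unfolding P_def by simp
qed

end
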